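(* Let $G$ be a query graph that is splittable and f-closed. Then for every sink $C\in\mathrm{Eq}$, $C^+=C^{\oplus}$.
   Context: $G=G[Q]$ is the query graph of a Boolean CQ without self-joins with atoms $R(u,v)$, $u\ne v$, first attribute the key: vertices are variables, each atom gives an edge $e_R=(u_R,v_R)$, consistent/inconsistent according to the type of $R$; $E^i$ = inconsistent edges. Paths may have zero edges. $x\to y$: a directed path with only consistent edges; $x\leadsto y$: any directed path; undirected paths ignore directions. For a path $P$ and vertex set $N$, $P\cap N$ is the set of vertices of $P$ in $N$. $u^{\oplus}=\{v:u\to v\}$, $u^+=\{v:u\leadsto v\}$, $u^{+,R}=\{v: u\leadsto v$ in $G-\{e_R\}\}$. For $R,S\in E^i$: $R\sim S$ iff $u_S\in u_R^+$ and $u_R\in u_S^+$; $[R]$ the class of $R$; $coupled^+(R)=[R]\cup\{S\in E^i:\exists$ undirected path $P$ from $v_R$ to $u_S$ with $P\cap u_R^{+,R}=\emptyset\}$; $G$ is splittable if there are no $R,S\in E^i$ with $R\in coupled^+(S)$, $S\in coupled^+(R)$ and $R\not\sim S$. $\mathrm{Eq}$ is the set of $\sim$-classes of $E^i$; for $C\in\mathrm{Eq}$, $C^{\oplus}=\bigcap_{R\in C}u_R^{\oplus}$ and $C^+=\bigcap_{R\in C}u_R^{+,R}$. $C_1<^{\oplus}C_2$ iff $C_1\ne C_2$ and some $S\in C_2$ has $u_S\in C_1^{\oplus}$; a sink is a maximal element of $<^{\oplus}$. $G$ is f-closed if for every $R\in E^i$, $v_R^{\oplus}\cap u_R^{+,R}\subseteq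 u_R^{\oplus}$. *)

theory Defs
  imports Main
begin

(* A query graph of a self-join-free Boolean CQ with binary atoms.
   At : the (finite) set of atoms; each atom R gives an edge e_R = (u R, v R).
   Inc : the set of atoms whose edge is inconsistent (E^i); the others are consistent. *)

definition query_graph :: "'r set \<Rightarrow> 'r set \<Rightarrow> ('r \<Rightarrow> 'v) \<Rightarrow> ('r \<Rightarrow> 'v) \<Rightarrow> bool" where
  "query_graph At Inc u v \<longleftrightarrow> finite At \<and> Inc \<subseteq> At \<and> (\<forall>R\<in>At. u R \<noteq> v R)"

definition dedges :: "'r set \<Rightarrow> ('r \<Rightarrow> 'v) \<Rightarrow> ('r \<Rightarrow> 'v) \<Rightarrow> ('v \<times> 'v) set" where
  "dedges B u v = {(u R, v R) | R. R \<in> B}"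

definition reach :: "'r set \<Rightarrow> ('r \<Rightarrow> 'v) \<Rightarrow> ('r \<Rightarrow> 'v) \<Rightarrow> 'v \<Rightarrow> 'v \<Rightarrow> bool" where
  "reach B u v x y \<longleftrightarrow> (x, y) \<in> (dedges B u v)\<^sup>*"

definition oplus_set :: "'r set \<Rightarrow> 'r set \<Rightarrow> ('r \<Rightarrow> 'v) \<Rightarrow> ('r \<Rightarrow> 'v) \<Rightarrow> 'v \<Rightarrow> 'v set" where
  "oplus_set At Inc u v x = {y. reach (At - Inc) u v x y}"

definition plus_set :: "'r set \<Rightarrow> ('r \<Rightarrow> 'v) \<Rightarrow> ('r \<Rightarrow> 'v) \<Rightarrow> 'v \<Rightarrow> 'v set" where
  "plus_set At u v x = {y. reach At u v x y}"

definition plusR_set :: "'r set \<Rightarrow> ('r \<Rightarrow> 'v) \<Rightarrow> ('r \<Rightarrow> 'v) \<Rightarrow> 'r \<Rightarrow> 'v set" where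
  "plusR_set At u v R = {y. reach (At - {R}) u v (u R) y}"

definition eqrel :: "'r set \<Rightarrow> 'r set \<Rightarrow> ('r \<Rightarrow> 'v) \<Rightarrow> ('r \<Rightarrow> 'v) \<Rightarrow> 'r \<Rightarrow> 'r \<Rightarrow> bool" where
  "eqrel At Inc u v R S \<longleftrightarrow> R \<in> Inc \<and> S \<in> Inc \<and>
     u S \<in> plus_set At u v (u R) \<and> u R \<in> plus_set At u v (u S)"

definition eqclass :: "'r set \<Rightarrow> 'r set \<Rightarrow> ('r \<Rightarrow> 'v) \<Rightarrow> ('r \<Rightarrow> 'v) \<Rightarrow> 'r \<Rightarrow> 'r set" where
  "eqclass At Inc u v R = {S \<in> Inc. eqrel At Inc u v R S}"

definition upath_avoid :: "'r set \<Rightarrow> ('r \<Rightarrow> 'v) \<Rightarrow> ('r \<Rightarrow> 'v) \<Rightarrow> 'v set \<Rightarrow> 'v \<Rightarrow> 'v \<Rightarrow> bool" where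
  "upath_avoid At u v N a b \<longleftrightarrow> a \<notin> N \<and> b \<notin> N \<and>
     (a, b) \<in> {(x, y). ((x, y) \<in> dedges At u v \<or> (y, x) \<in> dedges At u v) \<and> x \<notin> N \<and> y \<notin> N}\<^sup>*"

definition coupled :: "'r set \<Rightarrow> 'r set \<Rightarrow> ('r \<Rightarrow> 'v) \<Rightarrow> ('r \<Rightarrow> 'v) \<Rightarrow> 'r \<Rightarrow> 'r set" where
  "coupled At Inc u v R = eqclass At Inc u v R \<union>
     {S \<in> Inc. upath_avoid At u v (plusR_set At u v R) (v R) (u S)}"

definition splittable :: "'r set \<Rightarrow> 'r set \<Rightarrow> ('r \<Rightarrow> 'v) \<Rightarrow> ('r \<Rightarrow> 'v) \<Rightarrow> bool" where
  "splittable At Inc u v \<longleftrightarrow> \<not> (\<exists>R\<in>Inc. \<exists>S\<in>Inc. R \<in> coupled At Inc u v S \<and>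
      S \<in> coupled At Inc u v R \<and> \<not> eqrel At Inc u v R S)"

definition Eqc :: "'r set \<Rightarrow> 'r set \<Rightarrow> ('r \<Rightarrow> 'v) \<Rightarrow> ('r \<Rightarrow> 'v) \<Rightarrow> 'r set set" where
  "Eqc At Inc u v = {eqclass At Inc u v R | R. R \<in> Inc}"

definition class_oplus :: "'r set \<Rightarrow> 'r set \<Rightarrow> ('r \<Rightarrow> 'v) \<Rightarrow> ('r \<Rightarrow> 'v) \<Rightarrow> 'r set \<Rightarrow> 'v set" where
  "class_oplus At Inc u v C = (\<Inter>R\<in>C. oplus_set At Inc u v (u R))"

definition class_plus :: "'r set \<Rightarrow> ('r \<Rightarrow> 'v) \<Rightarrow> ('r \<Rightarrow> 'v) \<Rightarrow> 'r set \<Rightarrow> 'v set" where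
  "class_plus At u v C = (\<Inter>R\<in>C. plusR_set At u v R)"

definition class_less :: "'r set \<Rightarrow> 'r set \<Rightarrow> ('r \<Rightarrow> 'v) \<Rightarrow> ('r \<Rightarrow> 'v) \<Rightarrow> 'r set \<Rightarrow> 'r set \<Rightarrow> bool" where
  "class_less At Inc u v C1 C2 \<longleftrightarrow> C1 \<noteq> C2 \<and> (\<exists>S\<in>C2. u S \<in> class_oplus At Inc u v C1)"

definition is_sink :: "'r set \<Rightarrow> 'r set \<Rightarrow> ('r \<Rightarrow> 'v) \<Rightarrow> ('r \<Rightarrow> 'v) \<Rightarrow> 'r set \<Rightarrow> bool" where
  "is_sink At Inc u v C \<longleftrightarrow> C \<in> Eqc At Inc u v \<and>
     \<not> (\<exists>C'\<in>Eqc At Inc u v. class_less At Inc u v C C')"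

definition f_closed :: "'r set \<Rightarrow> 'r set \<Rightarrow> ('r \<Rightarrow> 'v) \<Rightarrow> ('r \<Rightarrow> 'v) \<Rightarrow> bool" where
  "f_closed At Inc u v \<longleftrightarrow> (\<forall>R\<in>Inc.
     oplus_set At Inc u v (v R) \<inter> plusR_set At u v R \<subseteq> oplus_set At Inc u v (u R))"

end

theory Submission
  imports Defs
begin

text \<open>
  \<open>C\<^sup>\<oplus> \<subseteq> C\<^sup>+\<close> holds because a consistent path uses no inconsistent edge. Conversely take
  \<open>x \<in> C\<^sup>+\<close> and a path from \<open>u\<^sub>R\<close> (\<open>R \<in> C\<close>) to \<open>x\<close> avoiding \<open>e\<^sub>R\<close>, and walk along it showing
  \<open>b\<^sup>\<oplus> \<inter> C\<^sup>+ \<subseteq> C\<^sup>\<oplus>\<close> for every vertex \<open>b\<close> on it; at \<open>b = x\<close> this gives \<open>x \<in> C\<^sup>\<oplus>\<close>.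
  At the start, f-closedness carries \<open>x\<close> backwards around the strong component of \<open>u\<^sub>R\<close>,
  whose inconsistent edges all belong to \<open>C\<close>. Crossing an edge \<open>e\<^sub>T\<close> can only fail if \<open>T\<close> is
  inconsistent and \<open>x \<notin> u\<^sub>T\<^sup>+\<^sup>,\<^sup>T\<close>. Then \<open>T \<notin> C\<close>; as \<open>C\<close> is a sink, \<open>u\<^sub>T \<notin> C\<^sup>\<oplus>\<close>, so the
  invariant at \<open>u\<^sub>T\<close> gives \<open>u\<^sub>T \<notin> C\<^sup>+\<close>, i.e. \<open>u\<^sub>T \<notin> u\<^sub>R\<^sub>'\<^sup>+\<^sup>,\<^sup>R\<^sup>'\<close> for some \<open>R' \<in> C\<close>. Cutting the paths \<open>u\<^sub>R\<^sub>' \<leadsto> u\<^sub>T\<close>, \<open>v\<^sub>T \<rightarrow> x\<close> and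
  \<open>u\<^sub>R\<^sub>' \<leadsto> x\<close> where they leave the relevant reachability sets shows that \<open>T\<close> and \<open>R'\<close>
  are coupled to each other without being equivalent, contradicting splittability.
\<close>

lemma dedgesI: "T \<in> B \<Longrightarrow> (u T, v T) \<in> dedges B u v"
  unfolding dedges_def by blast

lemma dedgesE: "(a, b) \<in> dedges B u v \<Longrightarrow> (\<And>T. T \<in> B \<Longrightarrow> a = u T \<Longrightarrow> b = v T \<Longrightarrow> P) \<Longrightarrow> P"
  unfolding dedges_def by blast

lemma reach_refl: "reach B u v x x"
  unfolding reach_def by simp

lemma reach_trans: "reach B u v x y \<Longrightarrow> reach B u v y z \<Longrightarrow> reach B u v x z"
  unfolding reach_def by (rule rtrancl_trans)

lemma reach_mono: "reach B u v x y \<Longrightarrow> B \<subseteq> B' \<Longrightarrow> reach B' u v x y"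
  unfolding reach_def dedges_def by (erule rtrancl_mono[THEN subsetD, rotated]) blast

lemma reach_step: "reach B u v x (u T) \<Longrightarrow> T \<in> B \<Longrightarrow> reach B u v x (v T)"
  unfolding reach_def by (meson dedgesI rtrancl.rtrancl_into_rtrancl)

lemma reach_stepl: "T \<in> B \<Longrightarrow> reach B u v (v T) y \<Longrightarrow> reach B u v (u T) y"
  unfolding reach_def by (meson dedgesI converse_rtrancl_into_rtrancl)

lemma reach_induct [consumes 1, case_names refl step]:
  assumes "reach B u v x y"
    and "P x"
    and "\<And>T. T \<in> B \<Longrightarrow> reach B u v x (u T) \<Longrightarrow> P (u T) \<Longrightarrow> P (v T)"
  shows "P y"
  using assms(1) unfolding reach_def
proof (induction rule: rtrancl_induct)
  case base
  show ?case by (rule assms(2))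
next
  case (step y z)
  then show ?case using assms(3) unfolding reach_def by (auto elim: dedgesE)
qed

lemma reach_converse_induct [consumes 1, case_names refl step]:
  assumes "reach B u v x y"
    and "P y"
    and "\<And>T. T \<in> B \<Longrightarrow> reach B u v (v T) y \<Longrightarrow> P (v T) \<Longrightarrow> P (u T)"
  shows "P x"
  using assms(1) unfolding reach_def
proof (induction rule: converse_rtrancl_induct)
  case base
  show ?case by (rule assms(2))
next
  case (step x z)
  then show ?case using assms(3) unfolding reach_def by (auto elim: dedgesE)
qed

lemma oplus_refl: "x \<in> oplus_set At Inc u v x"
  unfolding oplus_set_def by (simp add: reach_refl)

lemma head_in_plusR: "u R \<in> plusR_set At u v R"
  unfolding plusR_set_def by (simp add: reach_refl)

lemma plusR_step: "u T \<in> plusR_set At u v R \<Longrightarrow> T \<in> At \<Longrightarrow> T \<noteq> R \<Longrightarrow> v T \<in> plusR_set At u v R"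
  unfolding plusR_set_def by (simp add: reach_step)

lemma oplus_subset_plusR:
  "R \<in> Inc \<Longrightarrow> oplus_set At Inc u v (u R) \<subseteq> plusR_set At u v R"
  unfolding oplus_set_def plusR_set_def by (auto elim: reach_mono)

lemma oplus_back_edge:
  assumes "f_closed At Inc u v" "T \<in> At" "x \<in> oplus_set At Inc u v (v T)"
    and "T \<in> Inc \<Longrightarrow> x \<in> plusR_set At u v T"
  shows "x \<in> oplus_set At Inc u v (u T)"
proof (cases "T \<in> Inc")
  case True
  with assms show ?thesis unfolding f_closed_def by blast
next
  case False
  with assms(2,3) show ?thesis unfolding oplus_set_def by (simp add: reach_stepl)
qed

lemma eqrel_refl: "R \<in> Inc \<Longrightarrow> eqrel At Inc u v R R"
  unfolding eqrel_def plus_set_def by (simp add: reach_refl)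

lemma eqrel_sym: "eqrel At Inc u v R S \<Longrightarrow> eqrel At Inc u v S R"
  unfolding eqrel_def by auto

lemma eqrel_trans: "eqrel At Inc u v R S \<Longrightarrow> eqrel At Inc u v S T \<Longrightarrow> eqrel At Inc u v R T"
  unfolding eqrel_def plus_set_def by (auto intro: reach_trans)

lemma Eqc_subset_Inc: "C \<in> Eqc At Inc u v \<Longrightarrow> C \<subseteq> Inc"
  unfolding Eqc_def eqclass_def by auto

lemma Eqc_nonempty: "C \<in> Eqc At Inc u v \<Longrightarrow> \<exists>R. R \<in> C"
  unfolding Eqc_def eqclass_def by (auto intro: eqrel_refl)

lemma Eqc_eqrel: "C \<in> Eqc At Inc u v \<Longrightarrow> R \<in> C \<Longrightarrow> S \<in> C \<Longrightarrow> eqrel At Inc u v R S"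
  unfolding Eqc_def eqclass_def by (auto intro: eqrel_trans eqrel_sym)

lemma Eqc_closed:
  assumes "C \<in> Eqc At Inc u v" "R \<in> C" "eqrel At Inc u v R S"
  shows "S \<in> C"
proof -
  obtain R0 where C: "C = eqclass At Inc u v R0" using assms(1) unfolding Eqc_def by blast
  with assms(2,3) have "eqrel At Inc u v R0 S" by (auto simp: eqclass_def intro: eqrel_trans)
  with C show ?thesis by (simp add: eqclass_def eqrel_def)
qed

lemma sink_in_Eqc: "is_sink At Inc u v C \<Longrightarrow> C \<in> Eqc At Inc u v"
  unfolding is_sink_def by simp

lemma sink_absorbs:
  assumes "is_sink At Inc u v C" "T \<in> Inc" "u T \<in> class_oplus At Inc u v C"
  shows "T \<in> C"
proof -
  have T_class: "T \<in> eqclass At Inc u v T"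
    using assms(2) by (simp add: eqclass_def eqrel_refl)
  moreover have "eqclass At Inc u v T \<in> Eqc At Inc u v"
    using assms(2) unfolding Eqc_def by blast
  ultimately have "C = eqclass At Inc u v T"
    using assms unfolding is_sink_def class_less_def by blast
  with T_class show ?thesis by simp
qed

lemma upath_avoid_refl: "a \<notin> N \<Longrightarrow> upath_avoid At u v N a a"
  unfolding upath_avoid_def by simp

lemma upath_avoid_trans:
  "upath_avoid At u v N a b \<Longrightarrow> upath_avoid At u v N b c \<Longrightarrow> upath_avoid At u v N a c"
  unfolding upath_avoid_def by (meson rtrancl_trans)

lemma upath_avoid_sym:
  assumes "upath_avoid At u v N a b"
  shows "upath_avoid At u v N b a"
proof -
  let ?E = "{(x, y). ((x, y) \<in> dedges At u v \<or> (y, x) \<in> dedges At u v) \<and> x \<notin> N \<and> y \<notin> N}"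
  have "(b, a) \<in> (?E\<inverse>)\<^sup>*"
    using assms unfolding upath_avoid_def by (blast intro: rtrancl_converseI)
  moreover have "?E\<inverse> = ?E" by auto
  ultimately show ?thesis using assms unfolding upath_avoid_def by simp
qed

lemma upath_avoid_edge:
  "T \<in> At \<Longrightarrow> u T \<notin> N \<Longrightarrow> v T \<notin> N \<Longrightarrow> upath_avoid At u v N (u T) (v T)"
  unfolding upath_avoid_def by (blast intro: dedgesI)

text \<open>A path can only leave \<open>u\<^sub>R\<^sup>+\<^sup>,\<^sup>R\<close> through the edge \<open>e\<^sub>R\<close>.\<close>

lemma exit_plusR_through_head:
  assumes "reach At u v a y" "a \<in> plusR_set At u v R" "y \<notin> plusR_set At u v R"
  shows "upath_avoid At u v (plusR_set At u v R) (v R) y"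
  using assms(1,3)
proof (induction rule: reach_induct)
  case refl
  with assms(2) show ?case by simp
next
  case (step T)
  show ?case
  proof (cases "u T \<in> plusR_set At u v R")
    case True
    have "T = R"
    proof (rule ccontr)
      assume "T \<noteq> R"
      with True step.hyps(1) have "v T \<in> plusR_set At u v R" by (rule plusR_step)
      with step.prems show False ..
    qed
    with step.prems show ?thesis by (simp add: upath_avoid_refl)
  next
    case False
    then have "upath_avoid At u v (plusR_set At u v R) (v R) (u T)" by (rule step.IH)
    moreover have "upath_avoid At u v (plusR_set At u v R) (u T) (v T)"
      using step.hyps(1) False step.prems by (rule upath_avoid_edge)
    ultimately show ?thesis by (rule upath_avoid_trans)
  qed
qed

lemma reach_outside_plusR_avoids:
  assumes "reach (At - {T}) u v a y" "y \<notin> plusR_set At u v T"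
  shows "upath_avoid At u v (plusR_set At u v T) a y"
  using assms
proof (induction rule: reach_converse_induct)
  case refl
  then show ?case by (rule upath_avoid_refl)
next
  case (step T')
  then have tail: "upath_avoid At u v (plusR_set At u v T) (v T') y" by simp
  then have v_out: "v T' \<notin> plusR_set At u v T" by (simp add: upath_avoid_def)
  have u_out: "u T' \<notin> plusR_set At u v T"
  proof
    assume "u T' \<in> plusR_set At u v T"
    with step.hyps(1) have "v T' \<in> plusR_set At u v T" by (auto intro: plusR_step)
    with v_out show False ..
  qed
  have "upath_avoid At u v (plusR_set At u v T) (u T') (v T')"
    using step.hyps(1) u_out v_out by (auto intro: upath_avoid_edge)
  then show ?case using tail by (rule upath_avoid_trans)
qed

lemma reach_remove_edge_outside_plusR:
  assumes "reach (At - {R}) u v a y" "a \<in> plusR_set At u v R" "u T \<notin> plusR_set At u v R"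
  shows "reach (At - {T}) u v a y"
proof -
  from assms(1) have "reach (At - {T}) u v a y \<and> y \<in> plusR_set At u v R"
  proof (induction rule: reach_induct)
    case refl
    from assms(2) show ?case by (simp add: reach_refl)
  next
    case (step T')
    then have "T' \<noteq> T" using assms(3) by auto
    with step have "reach (At - {T}) u v a (v T')" by (auto intro: reach_step)
    moreover have "v T' \<in> plusR_set At u v R" using step by (auto intro: plusR_step)
    ultimately show ?case ..
  qed
  then show ?thesis ..
qed

lemma coupled_if_reach_outside_plusR:
  assumes "T \<in> Inc" "reach At u v (u R) (u T)" "u T \<notin> plusR_set At u v R"
  shows "T \<in> coupled At Inc u v R"
  using exit_plusR_through_head[OF assms(2) head_in_plusR assms(3)] assms(1)
  unfolding coupled_def by blast

lemma coupled_if_oplus_escapes: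
  assumes "R \<in> Inc" "T \<in> Inc"
    and "x \<in> oplus_set At Inc u v (v T)" "x \<notin> plusR_set At u v T"
    and "x \<in> plusR_set At u v R" "u T \<notin> plusR_set At u v R"
  shows "R \<in> coupled At Inc u v T"
proof -
  have "reach (At - {T}) u v (v T) x"
    using assms(2,3) unfolding oplus_set_def by (blast intro: reach_mono)
  then have from_head: "upath_avoid At u v (plusR_set At u v T) (v T) x"
    using assms(4) by (rule reach_outside_plusR_avoids)
  have "reach (At - {R}) u v (u R) x"
    using assms(5) by (simp add: plusR_set_def)
  then have "reach (At - {T}) u v (u R) x"
    using head_in_plusR assms(6) by (rule reach_remove_edge_outside_plusR)
  then have "upath_avoid At u v (plusR_set At u v T) x (u R)"
    using assms(4) by (blast intro: reach_outside_plusR_avoids upath_avoid_sym)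
  with from_head assms(1) show ?thesis
    unfolding coupled_def by (blast intro: upath_avoid_trans)
qed

lemma class_oplus_subset_class_plus:
  assumes "C \<subseteq> Inc"
  shows "class_oplus At Inc u v C \<subseteq> class_plus At u v C"
  unfolding class_oplus_def class_plus_def
proof (rule INT_anti_mono)
  fix R
  assume "R \<in> C"
  with assms have "R \<in> Inc" ..
  then show "oplus_set At Inc u v (u R) \<subseteq> plusR_set At u v R" by (rule oplus_subset_plusR)
qed simp

lemma oplus_on_strong_component:
  assumes fc: "f_closed At Inc u v" and C: "C \<in> Eqc At Inc u v" "R \<in> C"
    and x: "x \<in> oplus_set At Inc u v (u R)" "x \<in> class_plus At u v C"
    and "reach At u v b (u R)" "reach At u v (u R) b"
  shows "x \<in> oplus_set At Inc u v b"
  using assms(6,7)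
proof (induction rule: reach_converse_induct)
  case refl
  from x(1) show ?case .
next
  case (step T)
  have "reach At u v (u R) (v T)" using step.prems step.hyps(1) by (rule reach_step)
  with step.IH have x_head: "x \<in> oplus_set At Inc u v (v T)" by simp
  have "x \<in> plusR_set At u v T" if T_Inc: "T \<in> Inc"
  proof -
    have "reach At u v (u T) (u R)" using step.hyps by (rule reach_stepl)
    with step.prems T_Inc C(2) C(1)[THEN Eqc_subset_Inc] have "eqrel At Inc u v R T"
      unfolding eqrel_def plus_set_def by auto
    with C have "T \<in> C" by (rule Eqc_closed)
    with x(2) show ?thesis unfolding class_plus_def by blast
  qed
  with fc step.hyps(1) x_head show ?case by (rule oplus_back_edge)
qed

lemma oplus_in_class_oplus:
  assumes "f_closed At Inc u v" "C \<in> Eqc At Inc u v" "R \<in> C"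
    and "x \<in> oplus_set At Inc u v (u R)" "x \<in> class_plus At u v C"
  shows "x \<in> class_oplus At Inc u v C"
  unfolding class_oplus_def
proof
  fix S
  assume "S \<in> C"
  with assms(2,3) have "eqrel At Inc u v R S" by (rule Eqc_eqrel)
  then have "reach At u v (u S) (u R)" "reach At u v (u R) (u S)"
    unfolding eqrel_def plus_set_def by auto
  then show "x \<in> oplus_set At Inc u v (u S)" by (rule oplus_on_strong_component[OF assms])
qed

lemma class_oplus_step_back:
  assumes split: "splittable At Inc u v" and fc: "f_closed At Inc u v"
    and sink: "is_sink At Inc u v C" and R: "R \<in> C"
    and path: "reach At u v (u R) (u T)" and T: "T \<in> At"
    and IH: "oplus_set At Inc u v (u T) \<inter> class_plus At u v C \<subseteq> class_oplus At Inc u v C"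
    and x: "x \<in> oplus_set At Inc u v (v T)" and xp: "x \<in> class_plus At u v C"
  shows "x \<in> class_oplus At Inc u v C"
proof (cases "x \<in> oplus_set At Inc u v (u T)")
  case True
  with IH xp show ?thesis by blast
next
  case False
  have T_Inc: "T \<in> Inc" and x_out: "x \<notin> plusR_set At u v T"
    using oplus_back_edge[OF fc T x] False by blast+
  from x_out xp have T_notin: "T \<notin> C" unfolding class_plus_def by blast
  have C_Eqc: "C \<in> Eqc At Inc u v" using sink by (rule sink_in_Eqc)
  have "u T \<notin> class_plus At u v C"
  proof
    assume "u T \<in> class_plus At u v C"
    with IH oplus_refl[where x = "u T"] have "u T \<in> class_oplus At Inc u v C" by blast
    with sink T_Inc have "T \<in> C" by (rule sink_absorbs)
    with T_notin show False ..
  qed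
  then obtain R' where R': "R' \<in> C" "u T \<notin> plusR_set At u v R'"
    unfolding class_plus_def by blast
  have R'_Inc: "R' \<in> Inc" using Eqc_subset_Inc[OF C_Eqc] R'(1) ..
  have "reach At u v (u R') (u R)"
    using Eqc_eqrel[OF C_Eqc R'(1) R] by (simp add: eqrel_def plus_set_def)
  then have "reach At u v (u R') (u T)" using path by (rule reach_trans)
  with T_Inc have "T \<in> coupled At Inc u v R'"
    using R'(2) by (rule coupled_if_reach_outside_plusR)
  moreover have "R' \<in> coupled At Inc u v T"
  proof (rule coupled_if_oplus_escapes[OF R'_Inc T_Inc x x_out])
    show "x \<in> plusR_set At u v R'" using xp R'(1) unfolding class_plus_def by blast
  qed (rule R'(2))
  moreover have "\<not> eqrel At Inc u v R' T"
    using Eqc_closed[OF C_Eqc R'(1)] T_notin by blast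
  ultimately show ?thesis using split R'_Inc T_Inc unfolding splittable_def by blast
qed

lemma class_oplus_along_path:
  assumes split: "splittable At Inc u v" and fc: "f_closed At Inc u v"
    and sink: "is_sink At Inc u v C" and R: "R \<in> C"
    and "reach (At - {R}) u v (u R) b"
  shows "oplus_set At Inc u v b \<inter> class_plus At u v C \<subseteq> class_oplus At Inc u v C"
  using assms(5)
proof (induction rule: reach_induct)
  case refl
  from fc sink_in_Eqc[OF sink] R show ?case by (blast intro: oplus_in_class_oplus)
next
  case (step T)
  have path: "reach At u v (u R) (u T)" using step.hyps(2) by (rule reach_mono) blast
  have T: "T \<in> At" using step.hyps(1) by blast
  show ?case
  proof
    fix x
    assume "x \<in> oplus_set At Inc u v (v T) \<inter> class_plus At u v C"
    then show "x \<in> class_oplus At Inc u v C"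
      using class_oplus_step_back[OF split fc sink R path T step.IH] by blast
  qed
qed

lemma class_plus_subset_class_oplus:
  assumes "splittable At Inc u v" "f_closed At Inc u v" "is_sink At Inc u v C"
  shows "class_plus At u v C \<subseteq> class_oplus At Inc u v C"
proof
  fix x
  assume x: "x \<in> class_plus At u v C"
  obtain R where R: "R \<in> C" using Eqc_nonempty[OF sink_in_Eqc[OF assms(3)]] by blast
  with x have "reach (At - {R}) u v (u R) x"
    by (auto simp: class_plus_def plusR_set_def)
  with assms R have "oplus_set At Inc u v x \<inter> class_plus At u v C \<subseteq> class_oplus At Inc u v C"
    by (rule class_oplus_along_path)
  with x oplus_refl[where x = x] show "x \<in> class_oplus At Inc u v C" by blast
qed

theorem proposition5p5:
  fixes At Inc :: "'r set" and u v :: "'r \<Rightarrow> 'v" and C :: "'r set"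
  assumes "query_graph At Inc u v"
    and "splittable At Inc u v"
    and "f_closed At Inc u v"
    and "is_sink At Inc u v C"
  shows "class_plus At u v C = class_oplus At Inc u v C"
proof
  show "class_plus At u v C \<subseteq> class_oplus At Inc u v C"
    using assms(2-4) by (rule class_plus_subset_class_oplus)
  have "C \<subseteq> Inc" using assms(4) by (intro Eqc_subset_Inc sink_in_Eqc)
  then show "class_oplus At Inc u v C \<subseteq> class_plus At u v C"
    by (rule class_oplus_subset_class_plus)
qed

end
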